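(* (i) A diagonal matrix $D=\mathrm{diag}(z_1,z_2,z_3,z_4)\in U(4)$ can be written as $D=D_1\otimes D_2$ with $D_1,D_2$ diagonal elements of $U(2)$ if and only if $z_1z_2^{-1}z_3^{-1}z_4=1$. (ii) Every $4\times 4$ unitary matrix that is diagonal in the computational basis can be implemented, up to a global phase, by a circuit of at most five elementary gates.
   Context: The computational basis of $\mathbb{C}^2\otimes\mathbb{C}^2$ is $|00\rangle,|01\rangle,|10\rangle,|11\rangle$ in this order, and $\otimes$ is the Kronecker product. The elementary gates are the $4\times 4$ matrices of the following forms: $R_y(\theta)\otimes \mathbf{1}$ or $\mathbf{1}\otimes R_y(\theta)$, where $R_y(\theta)=\begin{pmatrix}\cos\theta/2 & \sin\theta/2\\ -\sin\theta/2 & \cos\theta/2\end{pmatrix}$; $R_z(\alpha)\otimes\mathbf{1}$ or $\mathbf{1}\otimes R_z(\alpha)$, where $R_z(\alpha)=\mathrm{diag}(e^{-i\alpha/2},e^{i\alpha/2})$ ($\theta,\alpha$ real); and the two CNOT gates, namely the permutation matrix swapping $|10\rangle\leftrightarrow|11\rangle$ and the permutation matrix swapping $|01\rangle\leftrightarrow|11\rangle$. A circuit computes the product of its gate matrices; implementing $U$ up to global phase means the product equals $cU$ for some $|c|=1$. *)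

theory Defs
  imports Complex_Main "Jordan_Normal_Form.Matrix"
begin

definition adj :: "complex mat \<Rightarrow> complex mat" where
  "adj A = mat (dim_col A) (dim_row A) (\<lambda>(i,j). cnj (A $$ (j,i)))"

definition unitary_mat :: "nat \<Rightarrow> complex mat \<Rightarrow> bool" where
  "unitary_mat n A \<longleftrightarrow> A \<in> carrier_mat n n \<and> A * adj A = 1\<^sub>m n"

definition kron :: "complex mat \<Rightarrow> complex mat \<Rightarrow> complex mat" where
  "kron A B = mat (dim_row A * dim_row B) (dim_col A * dim_col B)
     (\<lambda>(i,j). A $$ (i div dim_row B, j div dim_col B) * B $$ (i mod dim_row B, j mod dim_col B))"

definition diag_of :: "nat \<Rightarrow> (nat \<Rightarrow> complex) \<Rightarrow> complex mat" where
  "diag_of n z = mat n n (\<lambda>(i,j). if i = j then z i else 0)"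

definition Ry :: "real \<Rightarrow> complex mat" where
  "Ry \<theta> = mat_of_rows_list 2
     [[complex_of_real (cos (\<theta>/2)), complex_of_real (sin (\<theta>/2))],
      [complex_of_real (- sin (\<theta>/2)), complex_of_real (cos (\<theta>/2))]]"

definition Rz :: "real \<Rightarrow> complex mat" where
  "Rz \<alpha> = diag_of 2 (\<lambda>i. if i = 0 then cis (- \<alpha>/2) else cis (\<alpha>/2))"

(* basis order |00>,|01>,|10>,|11> = indices 0,1,2,3 *)
definition perm4 :: "(nat \<Rightarrow> nat) \<Rightarrow> complex mat" where
  "perm4 p = mat 4 4 (\<lambda>(i,j). if i = p j then 1 else 0)"

definition CNOT1 :: "complex mat" where   (* swaps |10> <-> |11> *)
  "CNOT1 = perm4 (Transposition.transpose 2 3)"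

definition CNOT2 :: "complex mat" where   (* swaps |01> <-> |11> *)
  "CNOT2 = perm4 (Transposition.transpose 1 3)"

definition elementary_gates :: "complex mat set" where
  "elementary_gates =
     {kron (Ry \<theta>) (1\<^sub>m 2) | \<theta>. True} \<union> {kron (1\<^sub>m 2) (Ry \<theta>) | \<theta>. True} \<union>
     {kron (Rz \<alpha>) (1\<^sub>m 2) | \<alpha>. True} \<union> {kron (1\<^sub>m 2) (Rz \<alpha>) | \<alpha>. True} \<union>
     {CNOT1, CNOT2}"

definition circuit_mat :: "complex mat list \<Rightarrow> complex mat" where
  "circuit_mat gs = foldr (\<lambda>g M. g * M) gs (1\<^sub>m 4)"

definition implements_up_to_phase :: "complex mat list \<Rightarrow> complex mat \<Rightarrow> bool" where
  "implements_up_to_phase gs U \<longleftrightarrow> (\<exists>c. cmod c = 1 \<and> circuit_mat gs = c \<cdot>\<^sub>m U)"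

end

theory Submission
  imports Defs "HOL-Combinatorics.Permutations"
begin

(*
  A Kronecker product of diagonal 2x2 matrices has diagonal (a0 b0, a0 b1, a1 b0, a1 b1),
  whence the criterion z0 z3 = z1 z2 for a diagonal matrix to factor.

  Up to a global phase, a diagonal unitary diag(e^(i p0), ..., e^(i p3)) is a product of
  exponentials of Z(x)I, I(x)Z and Z(x)Z, because the sign vectors of I(x)I, Z(x)I, I(x)Z, Z(x)Z
  are an orthogonal basis of R^4. The first two are the gates Rz(a)(x)1 and 1(x)Rz(b), and
  conjugating 1(x)Rz(c) by the CNOT controlled by the first qubit yields the third,
  so five gates suffice.
*)

lemma diag_of_carrier [simp]:
  "dim_row (diag_of n f) = n" "dim_col (diag_of n f) = n" "diag_of n f \<in> carrier_mat n n"
  by (auto simp: diag_of_def)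

lemma diag_of_index [simp]:
  "i < n \<Longrightarrow> j < n \<Longrightarrow> diag_of n f $$ (i, j) = (if i = j then f i else 0)"
  by (simp add: diag_of_def)

lemma diag_of_cong: "(\<And>i. i < n \<Longrightarrow> f i = g i) \<Longrightarrow> diag_of n f = diag_of n g"
  by (rule eq_matI) auto

lemma diagonal_mat_diag_of: "diagonal_mat (diag_of n f)"
  by (simp add: diagonal_mat_def)

lemma diagonal_mat_eq_diag_of:
  assumes "A \<in> carrier_mat n n" "diagonal_mat A"
  shows "A = diag_of n (\<lambda>i. A $$ (i, i))"
  using assms by (intro eq_matI) (auto simp: diagonal_mat_def)

lemma one_mat_eq_diag_of: "1\<^sub>m n = diag_of n (\<lambda>_. 1)"
  by (rule eq_matI) auto

lemma smult_diag_of: "c \<cdot>\<^sub>m diag_of n f = diag_of n (\<lambda>i. c * f i)"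
  by (rule eq_matI) auto

lemma mult_diag_of: "diag_of n f * diag_of n g = diag_of n (\<lambda>i. f i * g i)"
proof (rule eq_matI)
  fix i j assume "i < dim_row (diag_of n (\<lambda>i. f i * g i))"
    "j < dim_col (diag_of n (\<lambda>i. f i * g i))"
  then have ij: "i < n" "j < n" by auto
  have "(diag_of n f * diag_of n g) $$ (i, j)
      = (\<Sum>k<n. (if i = k then f i else 0) * (if k = j then g k else 0))"
    using ij by (simp add: scalar_prod_def atLeast0LessThan)
  also have "\<dots> = (\<Sum>k<n. if k = i then (if i = j then f i * g i else 0) else 0)"
    by (rule sum.cong) auto
  finally show "(diag_of n f * diag_of n g) $$ (i, j) = diag_of n (\<lambda>i. f i * g i) $$ (i, j)"
    using ij by simp
qed auto

lemma kron_diag_of: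
  "kron (diag_of m f) (diag_of n g) = diag_of (m * n) (\<lambda>i. f (i div n) * g (i mod n))"
proof (rule eq_matI)
  fix i j assume "i < dim_row (diag_of (m * n) (\<lambda>i. f (i div n) * g (i mod n)))"
    "j < dim_col (diag_of (m * n) (\<lambda>i. f (i div n) * g (i mod n)))"
  then have ij: "i < m * n" "j < m * n" by auto
  then have "n > 0" by (cases n) auto
  have "i = j \<longleftrightarrow> i div n = j div n \<and> i mod n = j mod n"
    by (metis div_mult_mod_eq)
  with ij \<open>n > 0\<close> show "kron (diag_of m f) (diag_of n g) $$ (i, j)
      = diag_of (m * n) (\<lambda>i. f (i div n) * g (i mod n)) $$ (i, j)"
    by (auto simp: kron_def less_mult_imp_div_less mult.commute)
qed (auto simp: kron_def)

lemma kron_diag_of_2: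
  "kron (diag_of 2 f) (diag_of 2 g) = diag_of 4 (\<lambda>i. f (i div 2) * g (i mod 2))"
  using kron_diag_of[of 2 f 2 g] by simp

lemma less_4_cases: "(i :: nat) < 4 \<Longrightarrow> i = 0 \<or> i = 1 \<or> i = 2 \<or> i = 3"
  by auto

lemma unitary_mat_diagonal_norm:
  assumes "unitary_mat n U" "diagonal_mat U" "i < n"
  shows "cmod (U $$ (i, i)) = 1"
proof -
  have U: "U \<in> carrier_mat n n" and UU: "U * adj U = 1\<^sub>m n"
    using assms(1) by (auto simp: unitary_mat_def)
  have "1 = (U * adj U) $$ (i, i)" using UU assms(3) by simp
  also have "\<dots> = (\<Sum>k<n. U $$ (i, k) * cnj (U $$ (i, k)))"
    using U assms(3) by (simp add: scalar_prod_def adj_def atLeast0LessThan)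
  also have "\<dots> = (\<Sum>k<n. if k = i then U $$ (i, i) * cnj (U $$ (i, i)) else 0)"
    using assms(2,3) U by (intro sum.cong) (auto simp: diagonal_mat_def)
  also have "\<dots> = U $$ (i, i) * cnj (U $$ (i, i))"
    using assms(3) by simp
  also have "\<dots> = complex_of_real ((cmod (U $$ (i, i)))\<^sup>2)"
    by (metis complex_norm_square)
  finally have "(cmod (U $$ (i, i)))\<^sup>2 = 1" by (metis of_real_eq_1_iff)
  then show ?thesis using norm_ge_zero by (smt (verit) power2_eq_1_iff)
qed

lemma unitary_mat_diag_of:
  assumes "\<And>i. i < n \<Longrightarrow> cmod (f i) = 1"
  shows "unitary_mat n (diag_of n f)"
proof -
  have "adj (diag_of n f) = diag_of n (\<lambda>i. cnj (f i))"
    by (rule eq_matI) (auto simp: adj_def)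
  moreover have "diag_of n (\<lambda>i. f i * cnj (f i)) = 1\<^sub>m n"
    by (rule eq_matI) (auto simp: complex_norm_square[symmetric] assms)
  ultimately show ?thesis by (simp add: unitary_mat_def mult_diag_of)
qed

lemma unitary_diagonal_mat_eq_diag_cis:
  assumes "unitary_mat n U" "diagonal_mat U"
  obtains p where "U = diag_of n (\<lambda>i. cis (p i))"
proof
  have U: "U \<in> carrier_mat n n" using assms(1) by (simp add: unitary_mat_def)
  have "cis (Arg (U $$ (i, i))) = U $$ (i, i)" if "i < n" for i
  proof -
    have norm: "cmod (U $$ (i, i)) = 1" using unitary_mat_diagonal_norm[OF assms that] .
    then have "U $$ (i, i) \<noteq> 0" by auto
    then show ?thesis by (simp add: cis_Arg sgn_div_norm norm)
  qed
  then have "diag_of n (\<lambda>i. cis (Arg (U $$ (i, i)))) = diag_of n (\<lambda>i. U $$ (i, i))"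
    by (rule diag_of_cong)
  also have "\<dots> = U" using diagonal_mat_eq_diag_of[OF U assms(2)] by simp
  finally show "U = diag_of n (\<lambda>i. cis (Arg (U $$ (i, i))))" by simp
qed

lemma perm4_carrier [simp]:
  "dim_row (perm4 p) = 4" "dim_col (perm4 p) = 4" "perm4 p \<in> carrier_mat 4 4"
  by (auto simp: perm4_def)

lemma perm4_index [simp]:
  "i < 4 \<Longrightarrow> j < 4 \<Longrightarrow> perm4 p $$ (i, j) = (if i = p j then 1 else 0)"
  by (simp add: perm4_def)

lemma mult_perm4:
  assumes "A \<in> carrier_mat 4 4" "p permutes {..<4}"
  shows "A * perm4 p = mat 4 4 (\<lambda>(i, j). A $$ (i, p j))"
proof (rule eq_matI)
  fix i j assume "i < dim_row (mat 4 4 (\<lambda>(i, j). A $$ (i, p j)))"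
    "j < dim_col (mat 4 4 (\<lambda>(i, j). A $$ (i, p j)))"
  then have ij: "i < 4" "j < 4" by auto
  then have "p j < 4" using assms(2) by (metis lessThan_iff permutes_in_image)
  have "(A * perm4 p) $$ (i, j) = (\<Sum>k<4. A $$ (i, k) * (if k = p j then 1 else 0))"
    using assms(1) ij by (auto simp: scalar_prod_def atLeast0LessThan intro!: sum.cong)
  also have "\<dots> = (\<Sum>k<4. if k = p j then A $$ (i, k) else 0)"
    by (rule sum.cong) auto
  also have "\<dots> = A $$ (i, p j)"
    using \<open>p j < 4\<close> by simp
  finally show "(A * perm4 p) $$ (i, j) = mat 4 4 (\<lambda>(i, j). A $$ (i, p j)) $$ (i, j)"
    using ij by simp
qed (use assms in auto)

lemma perm4_mult:
  assumes "A \<in> carrier_mat 4 4" "p permutes {..<4}"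
  shows "perm4 p * A = mat 4 4 (\<lambda>(i, j). A $$ (Hilbert_Choice.inv p i, j))"
proof (rule eq_matI)
  fix i j assume "i < dim_row (mat 4 4 (\<lambda>(i, j). A $$ (Hilbert_Choice.inv p i, j)))"
    "j < dim_col (mat 4 4 (\<lambda>(i, j). A $$ (Hilbert_Choice.inv p i, j)))"
  then have ij: "i < 4" "j < 4" by auto
  have inv_p: "Hilbert_Choice.inv p permutes {..<4}" using assms(2) by (rule permutes_inv)
  then have "Hilbert_Choice.inv p i < 4" using ij by (metis lessThan_iff permutes_in_image)
  have "i = p k \<longleftrightarrow> k = Hilbert_Choice.inv p i" for k
    using assms(2) by (metis permutes_inverses)
  then have "(perm4 p * A) $$ (i, j)
      = (\<Sum>k<4. (if k = Hilbert_Choice.inv p i then 1 else 0) * A $$ (k, j))"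
    using assms(1) ij by (auto simp: scalar_prod_def atLeast0LessThan intro!: sum.cong)
  also have "\<dots> = (\<Sum>k<4. if k = Hilbert_Choice.inv p i then A $$ (k, j) else 0)"
    by (rule sum.cong) auto
  also have "\<dots> = A $$ (Hilbert_Choice.inv p i, j)"
    using \<open>Hilbert_Choice.inv p i < 4\<close> by simp
  finally show "(perm4 p * A) $$ (i, j)
      = mat 4 4 (\<lambda>(i, j). A $$ (Hilbert_Choice.inv p i, j)) $$ (i, j)"
    using ij by simp
qed (use assms in auto)

lemma perm4_conj_diag_of:
  assumes "p permutes {..<4}"
  shows "perm4 (Hilbert_Choice.inv p) * (diag_of 4 f * perm4 p) = diag_of 4 (\<lambda>i. f (p i))"
proof -
  have inv_p: "Hilbert_Choice.inv p permutes {..<4}" using assms by (rule permutes_inv)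
  have p_lt: "p i < 4" if "i < 4" for i using assms that by (metis lessThan_iff permutes_in_image)
  have "perm4 (Hilbert_Choice.inv p) * (diag_of 4 f * perm4 p)
      = mat 4 4 (\<lambda>(i, j). (diag_of 4 f * perm4 p) $$ (p i, j))"
    using perm4_mult[OF mult_carrier_mat[OF diag_of_carrier(3) perm4_carrier(3)] inv_p] assms
    by (simp add: permutes_inv_inv)
  also have "\<dots> = diag_of 4 (\<lambda>i. f (p i))"
    using assms by (intro eq_matI) (auto simp: mult_perm4 p_lt permutes_inj inj_eq)
  finally show ?thesis .
qed

lemma CNOT1_conj_diag_of:
  "CNOT1 * (diag_of 4 f * CNOT1) = diag_of 4 (\<lambda>i. f (Transposition.transpose 2 3 i))"
  using perm4_conj_diag_of[of "Transposition.transpose 2 3" f]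
  by (simp add: CNOT1_def permutes_swap_id)

lemma diag_of_4_eq_kron_iff:
  assumes norm: "\<And>i. i < 4 \<Longrightarrow> cmod (z i) = 1"
  shows "(\<exists>D1 D2. unitary_mat 2 D1 \<and> diagonal_mat D1 \<and> unitary_mat 2 D2 \<and> diagonal_mat D2 \<and>
            diag_of 4 z = kron D1 D2)
         \<longleftrightarrow> z 0 * z 3 = z 1 * z 2"
proof
  assume "\<exists>D1 D2. unitary_mat 2 D1 \<and> diagonal_mat D1 \<and> unitary_mat 2 D2 \<and> diagonal_mat D2 \<and>
            diag_of 4 z = kron D1 D2"
  then obtain D1 D2 where D: "unitary_mat 2 D1" "diagonal_mat D1" "unitary_mat 2 D2"
    "diagonal_mat D2" and z: "diag_of 4 z = kron D1 D2" by blast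
  define d1 where "d1 i = D1 $$ (i, i)" for i
  define d2 where "d2 i = D2 $$ (i, i)" for i
  have "D1 = diag_of 2 d1" "D2 = diag_of 2 d2"
    using D diagonal_mat_eq_diag_of unfolding unitary_mat_def d1_def d2_def by blast+
  with z have "diag_of 4 z = diag_of 4 (\<lambda>i. d1 (i div 2) * d2 (i mod 2))"
    by (simp add: kron_diag_of_2)
  then have "z i = d1 (i div 2) * d2 (i mod 2)" if "i < 4" for i
    using that by (metis diag_of_index)
  from this[of 0] this[of 1] this[of 2] this[of 3] show "z 0 * z 3 = z 1 * z 2"
    by (simp add: ac_simps)
next
  assume z: "z 0 * z 3 = z 1 * z 2"
  have "z 0 \<noteq> 0" using norm[of 0] by auto
  define D1 where "D1 = diag_of 2 (\<lambda>i. if i = 0 then 1 else z 2 / z 0)"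
  define D2 where "D2 = diag_of 2 z"
  have "unitary_mat 2 D1" unfolding D1_def
    by (rule unitary_mat_diag_of) (simp add: norm norm_divide)
  moreover have "unitary_mat 2 D2" unfolding D2_def
    by (rule unitary_mat_diag_of) (simp add: norm)
  moreover have "diag_of 4 z = kron D1 D2"
    unfolding D1_def D2_def kron_diag_of_2
    by (rule diag_of_cong) (use z \<open>z 0 \<noteq> 0\<close> in \<open>auto simp: field_simps dest!: less_4_cases\<close>)
  ultimately show "\<exists>D1 D2. unitary_mat 2 D1 \<and> diagonal_mat D1 \<and> unitary_mat 2 D2 \<and>
      diagonal_mat D2 \<and> diag_of 4 z = kron D1 D2"
    unfolding D1_def D2_def using diagonal_mat_diag_of by blast
qed

lemma circuit_mat_Rz_CNOT1:
  "circuit_mat [kron (Rz a) (1\<^sub>m 2), kron (1\<^sub>m 2) (Rz b), CNOT1, kron (1\<^sub>m 2) (Rz c), CNOT1]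
   = diag_of 4 (\<lambda>i. [cis (- a / 2 - b / 2 - c / 2), cis (- a / 2 + b / 2 + c / 2),
                     cis (a / 2 - b / 2 + c / 2), cis (a / 2 + b / 2 - c / 2)] ! i)"
proof -
  have "CNOT1 * 1\<^sub>m 4 = CNOT1" by (simp add: CNOT1_def)
  then have "circuit_mat
        [kron (Rz a) (1\<^sub>m 2), kron (1\<^sub>m 2) (Rz b), CNOT1, kron (1\<^sub>m 2) (Rz c), CNOT1]
      = kron (Rz a) (1\<^sub>m 2) * (kron (1\<^sub>m 2) (Rz b) * (CNOT1 * (kron (1\<^sub>m 2) (Rz c) * CNOT1)))"
    by (simp add: circuit_mat_def)
  also have "\<dots> = diag_of 4 (\<lambda>i. [cis (- a / 2 - b / 2 - c / 2), cis (- a / 2 + b / 2 + c / 2),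
                     cis (a / 2 - b / 2 + c / 2), cis (a / 2 + b / 2 - c / 2)] ! i)"
    unfolding Rz_def one_mat_eq_diag_of kron_diag_of_2 CNOT1_conj_diag_of mult_diag_of
    by (rule diag_of_cong)
      (auto simp: cis_mult Transposition.transpose_def algebra_simps dest!: less_4_cases)
  finally show ?thesis .
qed

lemma diagonal_unitary_implementable_by_5_gates:
  assumes "unitary_mat 4 U" "diagonal_mat U"
  shows "\<exists>gs. length gs \<le> 5 \<and> set gs \<subseteq> elementary_gates \<and> implements_up_to_phase gs U"
proof -
  obtain p where U: "U = diag_of 4 (\<lambda>i. cis (p i))"
    using unitary_diagonal_mat_eq_diag_cis[OF assms] .
  \<comment> \<open>Coordinates of p in the Walsh basis: p k = g + (\<plusminus>a \<plusminus> b \<plusminus> c) / 2.\<close>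
  define a where "a = (p 2 + p 3 - p 0 - p 1) / 2"
  define b where "b = (p 1 + p 3 - p 0 - p 2) / 2"
  define c where "c = (p 1 + p 2 - p 0 - p 3) / 2"
  define g where "g = (p 0 + p 1 + p 2 + p 3) / 4"
  define gs where
    "gs = [kron (Rz a) (1\<^sub>m 2), kron (1\<^sub>m 2) (Rz b), CNOT1, kron (1\<^sub>m 2) (Rz c), CNOT1]"
  have "set gs \<subseteq> elementary_gates" unfolding gs_def elementary_gates_def by auto
  moreover have "circuit_mat gs = cis (- g) \<cdot>\<^sub>m U"
    unfolding gs_def circuit_mat_Rz_CNOT1 U smult_diag_of
    by (rule diag_of_cong)
      (auto simp: cis_mult a_def b_def c_def g_def field_simps dest!: less_4_cases
        intro!: arg_cong[where f = cis])
  ultimately show ?thesis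
    unfolding implements_up_to_phase_def
    by (intro exI[of _ gs]) (auto simp: gs_def intro!: exI[of _ "cis (- g)"])
qed

theorem proposition1:
  shows "(\<forall>z1 z2 z3 z4.
            unitary_mat 4 (diag_of 4 (\<lambda>i. [z1, z2, z3, z4] ! i)) \<longrightarrow>
            ((\<exists>D1 D2. unitary_mat 2 D1 \<and> diagonal_mat D1 \<and>
                      unitary_mat 2 D2 \<and> diagonal_mat D2 \<and>
                      diag_of 4 (\<lambda>i. [z1, z2, z3, z4] ! i) = kron D1 D2)
             \<longleftrightarrow> z1 * inverse z2 * inverse z3 * z4 = 1))
       \<and> (\<forall>U. unitary_mat 4 U \<and> diagonal_mat U \<longrightarrow>
            (\<exists>gs. length gs \<le> 5 \<and> set gs \<subseteq> elementary_gates \<and>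
                  implements_up_to_phase gs U))"
proof -
  have "(\<exists>D1 D2. unitary_mat 2 D1 \<and> diagonal_mat D1 \<and> unitary_mat 2 D2 \<and> diagonal_mat D2 \<and>
            diag_of 4 (\<lambda>i. [z1, z2, z3, z4] ! i) = kron D1 D2)
        \<longleftrightarrow> z1 * inverse z2 * inverse z3 * z4 = 1"
    if U: "unitary_mat 4 (diag_of 4 (\<lambda>i. [z1, z2, z3, z4] ! i))" for z1 z2 z3 z4
  proof -
    have norm: "cmod ([z1, z2, z3, z4] ! i) = 1" if "i < 4" for i
      using unitary_mat_diagonal_norm[OF U diagonal_mat_diag_of that] that by simp
    then have "z2 \<noteq> 0" "z3 \<noteq> 0" using norm[of 1] norm[of 2] by auto
    then have "z1 * inverse z2 * inverse z3 * z4 = 1 \<longleftrightarrow> z1 * z4 = z2 * z3"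
      by (auto simp: field_simps)
    with diag_of_4_eq_kron_iff[OF norm] show ?thesis by simp
  qed
  with diagonal_unitary_implementable_by_5_gates show ?thesis by blast
qed

end
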